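(* Let $G$ be an abelian profinite-$C$ group. Then the following are equivalent: (i) $G$ is a $C$-group; (ii) $G$ is a torsion group; (iii) $G$ has squarefree finite exponent.
   Context: A permutable complement of a subgroup $H$ of a group $G$ is a subgroup $K$ with $G=HK$ and $H\cap K=1$. A group is a $C$-group if every subgroup has a permutable complement. A profinite group $G$ is a profinite-$C$ group if every closed subgroup of $G$ has a closed permutable complement in $G$. *)

theory Defs
  imports "HOL-Analysis.Analysis" "HOL-Algebra.Coset" "HOL-Computational_Algebra.Squarefree"
begin

definition topological_group :: "('a, 'b) monoid_scheme \<Rightarrow> 'a topology \<Rightarrow> bool" where
  "topological_group G T \<longleftrightarrow> group G \<and> topspace T = carrier G \<and>
     continuous_map (prod_topology T T) T (\<lambda>(x, y). x \<otimes>\<^bsub>G\<^esub> y) \<and>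
     continuous_map T T (\<lambda>x. inv\<^bsub>G\<^esub> x)"

definition profinite_group :: "('a, 'b) monoid_scheme \<Rightarrow> 'a topology \<Rightarrow> bool" where
  "profinite_group G T \<longleftrightarrow> topological_group G T \<and> compact_space T \<and> Hausdorff_space T \<and>
     (\<forall>x \<in> topspace T. connected_component_of_set T x = {x})"

definition permutable_complement :: "('a, 'b) monoid_scheme \<Rightarrow> 'a set \<Rightarrow> 'a set \<Rightarrow> bool" where
  "permutable_complement G H K \<longleftrightarrow> subgroup K G \<and> H <#>\<^bsub>G\<^esub> K = carrier G \<and>
     H \<inter> K = {\<one>\<^bsub>G\<^esub>}"

definition C_group :: "('a, 'b) monoid_scheme \<Rightarrow> bool" where
  "C_group G \<longleftrightarrow> (\<forall>H. subgroup H G \<longrightarrow> (\<exists>K. permutable_complement G H K))"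

definition profinite_C_group :: "('a, 'b) monoid_scheme \<Rightarrow> 'a topology \<Rightarrow> bool" where
  "profinite_C_group G T \<longleftrightarrow> profinite_group G T \<and>
     (\<forall>H. subgroup H G \<and> closedin T H \<longrightarrow>
        (\<exists>K. closedin T K \<and> permutable_complement G H K))"

definition torsion_group :: "('a, 'b) monoid_scheme \<Rightarrow> bool" where
  "torsion_group G \<longleftrightarrow> (\<forall>x \<in> carrier G. \<exists>n::nat. n > 0 \<and> x [^]\<^bsub>G\<^esub> n = \<one>\<^bsub>G\<^esub>)"

definition is_exponent :: "('a, 'b) monoid_scheme \<Rightarrow> nat \<Rightarrow> bool" where
  "is_exponent G e \<longleftrightarrow> e > 0 \<and> (\<forall>x \<in> carrier G. x [^]\<^bsub>G\<^esub> e = \<one>\<^bsub>G\<^esub>) \<and>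
     (\<forall>m > 0. (\<forall>x \<in> carrier G. x [^]\<^bsub>G\<^esub> m = \<one>\<^bsub>G\<^esub>) \<longrightarrow> e \<le> m)"

end

theory Submission
  imports Defs "HOL-Algebra.Multiplicative_Group"
begin

(*
  A C-group is torsion: if x had infinite order, write x = h k with h in H = <x^2> and k in a
  complement K; then k is an odd power of x, so k^2 is a nontrivial element of H \<inter> K.

  In an abelian profinite-C group every finite subgroup is closed, hence complemented. If y had
  order p^2, then for y = h k with h in <y^p> we get k^p = y^p, so <y^p> meets its complement:
  element orders are squarefree. Conversely, in an abelian torsion group with squarefree element
  orders, let K be maximal among the subgroups meeting H trivially. Every element y of prime order
  lies in HK, for otherwise K<y> would still meet H trivially; an element x of squarefree order
  pm (p prime) is generated by x^m and x^p, of orders p and m, so by induction HK = G.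

  Finally, a compact torsion group is the countable union of the closed sets {x. x^n = 1}, so by
  Baire one of them contains a nonempty open set U. Finitely many translates of U cover G, which
  bounds the exponent; the least exponent is squarefree because all element orders are.
*)

lemma (in group) subgroup_nat_pow_closed:
  assumes "subgroup K G" "k \<in> K"
  shows "k [^] (n::nat) \<in> K"
  using subgroup_int_pow_closed[OF assms, of "int n"] by (simp add: int_pow_int)

lemma (in group) torsion_group_iff_ord_nonzero:
  "torsion_group G \<longleftrightarrow> (\<forall>x\<in>carrier G. ord x \<noteq> 0)"
  unfolding torsion_group_def by (auto simp: ord_eq_0)

lemma (in group) ord_pow_factor:
  assumes "x \<in> carrier G" "ord x = p * q" "p \<noteq> 0"
  shows "ord (x [^] p) = q"
  using assms ord_pow[of x p] by simp

lemma (in group) finite_generate_singleton: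
  assumes "x \<in> carrier G" "ord x \<noteq> 0"
  shows "finite (generate G {x})"
  using assms generate_pow_card[of x] card.infinite by metis

lemma (in group) mem_subgroup_if_coprime_pows:
  assumes M: "subgroup M G" and y: "y \<in> carrier G"
    and a: "y [^] (a::nat) \<in> M" and b: "y [^] (b::nat) \<in> M" and "coprime a b"
  shows "y \<in> M"
proof -
  have "gcd (int a) (int b) = 1"
    using \<open>coprime a b\<close> by (metis coprime_iff_gcd_eq_1 coprime_int_iff)
  then obtain s t :: int where "s * int a + t * int b = 1"
    using bezout_int[of "int a" "int b"] by metis
  then have "y = y [^] (int a * s + int b * t)"
    using y by (simp add: mult.commute)
  also have "\<dots> = (y [^] a) [^] s \<otimes> (y [^] b) [^] t"
    using y by (simp add: int_pow_pow int_pow_mult flip: int_pow_int)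
  finally have "y = (y [^] a) [^] s \<otimes> (y [^] b) [^] t" .
  then show ?thesis
    using M a b by (metis subgroup.m_closed subgroup_int_pow_closed)
qed

lemma (in group) pow_mem_subgroup_prime_ord:
  assumes "subgroup M G" "y \<in> carrier G" "prime (ord y)" "y [^] (i::nat) \<in> M" "y \<notin> M"
  shows "y [^] i = \<one>"
proof -
  have "y [^] ord y \<in> M"
    using assms(1,2) by (simp add: subgroup.one_closed)
  then have "\<not> coprime i (ord y)"
    using mem_subgroup_if_coprime_pows[OF assms(1,2,4)] assms(5) by blast
  then have "ord y dvd i"
    using assms(3) prime_imp_coprime coprime_commute by metis
  then show ?thesis
    using assms(2) by (simp add: pow_eq_id)
qed

lemma permutable_complementE:
  assumes "permutable_complement G H K" "x \<in> carrier G"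
  obtains h k where "h \<in> H" "k \<in> K" "x = h \<otimes>\<^bsub>G\<^esub> k"
  using assms unfolding permutable_complement_def set_mult_def by blast

lemma (in group) subgroups_subset_set_mult:
  assumes "subgroup H G" "subgroup K G"
  shows "H \<subseteq> H <#> K" "K \<subseteq> H <#> K"
proof -
  have "h \<otimes> \<one> \<in> H <#> K" if "h \<in> H" for h
    using that assms(2) subgroup.one_closed unfolding set_mult_def by blast
  then show "H \<subseteq> H <#> K"
    using assms(1) subgroup.mem_carrier by fastforce
  have "\<one> \<otimes> k \<in> H <#> K" if "k \<in> K" for k
    using that assms(1) subgroup.one_closed unfolding set_mult_def by blast
  then show "K \<subseteq> H <#> K"
    using assms(2) subgroup.mem_carrier by fastforce
qed

lemma (in group) square_cyclic_subgroup_no_complement: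
  assumes x: "x \<in> carrier G" and "ord x = 0"
  shows "\<not> permutable_complement G (generate G {x [^] (2::int)}) K"
proof
  let ?H = "generate G {x [^] (2::int)}"
  assume K: "permutable_complement G ?H K"
  then have "subgroup K G" and disjoint: "?H \<inter> K = {\<one>}"
    unfolding permutable_complement_def by auto
  obtain h k where h: "h \<in> ?H" and k: "k \<in> K" and xhk: "x = h \<otimes> k"
    using permutable_complementE[OF K x] .
  obtain i :: int where hi: "h = x [^] (2 * i)"
    using h x by (auto simp: generate_pow int_pow_pow)
  have "h \<in> carrier G" "k \<in> carrier G"
    using x hi \<open>subgroup K G\<close> k subgroup.mem_carrier by auto
  then have "k = inv h \<otimes> x"
    using xhk by (simp add: inv_solve_left)
  also have "\<dots> = x [^] (- (2 * i)) \<otimes> x [^] (1::int)"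
    using x hi by (simp add: int_pow_neg)
  also have "\<dots> = x [^] (1 - 2 * i)"
    using x int_pow_mult[of x "- (2 * i)" 1] by simp
  finally have "k [^] (2::int) = (x [^] (2::int)) [^] (1 - 2 * i)"
    using x by (simp add: int_pow_pow mult.commute)
  moreover have "k [^] (2::int) \<in> K"
    using \<open>subgroup K G\<close> k by (rule subgroup_int_pow_closed)
  moreover have "(x [^] (2::int)) [^] (1 - 2 * i) \<in> ?H"
    using x by (auto simp: generate_pow)
  ultimately have "x [^] (2 * (1 - 2 * i)) = \<one>"
    using disjoint x by (auto simp: int_pow_pow)
  then have "2 * (1 - 2 * i) = 0"
    using x \<open>ord x = 0\<close> by (simp add: int_pow_eq_id)
  then show False
    by presburger
qed

lemma (in group) C_group_imp_torsion_group:
  assumes "C_group G"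
  shows "torsion_group G"
  unfolding torsion_group_iff_ord_nonzero
proof
  fix x assume x: "x \<in> carrier G"
  have "subgroup (generate G {x [^] (2::int)}) G"
    using x by (simp add: generate_is_subgroup)
  then show "ord x \<noteq> 0"
    using assms x square_cyclic_subgroup_no_complement unfolding C_group_def by blast
qed

lemma (in comm_group) order_p_subgroup_of_order_p2_no_complement:
  assumes y: "y \<in> carrier G" and p: "prime p" and oy: "ord y = p^2"
  shows "\<not> permutable_complement G (generate G {y [^] p}) K"
proof
  let ?u = "y [^] p"
  assume K: "permutable_complement G (generate G {?u}) K"
  then have "subgroup K G" and disjoint: "generate G {?u} \<inter> K = {\<one>}"
    unfolding permutable_complement_def by auto
  obtain h k where h: "h \<in> generate G {?u}" and k: "k \<in> K" and yhk: "y = h \<otimes> k"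
    using permutable_complementE[OF K y] .
  have ou: "ord ?u = p"
    using y oy p ord_pow_factor[of y p p] by (simp add: power2_eq_square prime_gt_0_nat)
  have "generate G {?u} = {?u [^] j | j. j \<in> (UNIV :: nat set)}"
    using y ou p by (intro generate_pow_nat) auto
  then obtain j :: nat where "h = ?u [^] j"
    using h by blast
  then have "h [^] p = (?u [^] p) [^] j"
    using y by (simp add: nat_pow_pow ac_simps)
  moreover have "?u [^] p = \<one>"
    using y ou pow_ord_eq_1[of ?u] by simp
  ultimately have "h [^] p = \<one>"
    using y by simp
  moreover have "h \<in> carrier G"
    using h y generate_incl[of "{?u}"] by auto
  moreover have "k \<in> carrier G"
    using \<open>subgroup K G\<close> k by (rule subgroup.mem_carrier)
  ultimately have "k [^] p = ?u"
    unfolding yhk by (simp add: nat_pow_distrib)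
  then have "?u \<in> generate G {?u} \<inter> K"
    using subgroup_nat_pow_closed[OF \<open>subgroup K G\<close> k, of p] by (simp add: generate.incl)
  then have "ord ?u = 1"
    using disjoint by simp
  with ou have "p = 1"
    by simp
  with p show False
    by simp
qed

lemma (in comm_group) squarefree_ord_if_finite_subgroups_complemented:
  assumes complemented: "\<And>H. subgroup H G \<Longrightarrow> finite H \<Longrightarrow> \<exists>K. permutable_complement G H K"
    and x: "x \<in> carrier G" and "ord x \<noteq> 0"
  shows "squarefree (ord x)"
proof (rule ccontr)
  assume "\<not> squarefree (ord x)"
  then obtain p :: nat where p: "prime p" and "p^2 dvd ord x"
    using squarefree_factorial_semiring[OF \<open>ord x \<noteq> 0\<close>] by blast
  from \<open>p^2 dvd ord x\<close> obtain m where "ord x = m * p^2"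
    by (metis dvdE mult.commute)
  moreover have "m \<noteq> 0"
    using \<open>ord x \<noteq> 0\<close> calculation by auto
  ultimately have y: "x [^] m \<in> carrier G" and oy: "ord (x [^] m) = p^2"
    using x ord_pow_factor by auto
  have "p \<noteq> 0" "p^2 = p * p"
    using p by (auto simp: power2_eq_square)
  then have "ord ((x [^] m) [^] p) = p"
    using y oy ord_pow_factor by metis
  then have "finite (generate G {(x [^] m) [^] p})"
    using y p finite_generate_singleton[of "(x [^] m) [^] p"] by auto
  moreover have "subgroup (generate G {(x [^] m) [^] p}) G"
    using y by (simp add: generate_is_subgroup)
  ultimately show False
    using complemented order_p_subgroup_of_order_p2_no_complement[OF y p oy] by blast
qed

lemma profinite_groupD:
  assumes "profinite_group G T"
  shows "topological_group G T" "topspace T = carrier G" "compact_space T" "Hausdorff_space T"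
  using assms unfolding profinite_group_def topological_group_def by simp_all

lemma profinite_C_group_finite_subgroups_complemented:
  assumes "profinite_C_group G T" "subgroup H G" "finite H"
  shows "\<exists>K. permutable_complement G H K"
proof -
  have profinite: "profinite_group G T"
    using assms(1) unfolding profinite_C_group_def by simp
  have "t1_space T"
    using Hausdorff_imp_t1_space profinite_groupD(4)[OF profinite] .
  moreover have "H \<subseteq> topspace T"
    using profinite_groupD(2)[OF profinite] subgroup.subset[OF assms(2)] by simp
  ultimately have "closedin T H"
    using assms(3) t1_space_closedin_finite by blast
  then show ?thesis
    using assms(1,2) unfolding profinite_C_group_def by blast
qed

lemma (in group) subgroup_Union_chain:
  assumes "\<C> \<noteq> {}" "subset.chain {K. subgroup K G} \<C>"
  shows "subgroup (\<Union>\<C>) G"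
proof
  have sub: "subgroup K G" if "K \<in> \<C>" for K
    using assms(2) that unfolding subset.chain_def by blast
  show "\<Union>\<C> \<subseteq> carrier G"
    using subgroup.subset[OF sub] by blast
  show "\<one> \<in> \<Union>\<C>"
    using assms(1) subgroup.one_closed[OF sub] by blast
  show "inv a \<in> \<Union>\<C>" if "a \<in> \<Union>\<C>" for a
  proof -
    from that obtain K where "K \<in> \<C>" "a \<in> K"
      by blast
    then show ?thesis
      using subgroup.m_inv_closed[OF sub] by blast
  qed
  show "a \<otimes> b \<in> \<Union>\<C>" if "a \<in> \<Union>\<C>" "b \<in> \<Union>\<C>" for a b
  proof -
    have "{a, b} \<subseteq> \<Union>\<C>"
      using that by blast
    then obtain K where "K \<in> \<C>" "{a, b} \<subseteq> K"
      using finite_subset_Union_chain[of "{a, b}" \<C>] assms by blast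
    then show ?thesis
      using subgroup.m_closed[OF sub] by blast
  qed
qed

lemma (in group) maximal_disjoint_subgroup_exists:
  assumes H: "subgroup H G"
  obtains K where "subgroup K G" "H \<inter> K = {\<one>}"
    "\<And>K'. subgroup K' G \<Longrightarrow> H \<inter> K' = {\<one>} \<Longrightarrow> K \<subseteq> K' \<Longrightarrow> K' = K"
proof -
  let ?\<A> = "{K. subgroup K G \<and> H \<inter> K = {\<one>}}"
  have "\<exists>K\<in>?\<A>. \<forall>K'\<in>?\<A>. K \<subseteq> K' \<longrightarrow> K' = K"
  proof (rule subset_Zorn_nonempty)
    have "H \<inter> {\<one>} = {\<one>}"
      using subgroup.one_closed[OF H] by blast
    then show "?\<A> \<noteq> {}"
      using triv_subgroup by blast
    fix \<C> assume "\<C> \<noteq> {}" and chain: "subset.chain ?\<A> \<C>"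
    then have "subgroup (\<Union>\<C>) G"
      by (intro subgroup_Union_chain) (auto simp: subset.chain_def)
    moreover have "H \<inter> \<Union>\<C> = {\<one>}"
      using chain \<open>\<C> \<noteq> {}\<close> unfolding subset.chain_def by blast
    ultimately show "\<Union>\<C> \<in> ?\<A>"
      by blast
  qed
  then obtain K where "subgroup K G" "H \<inter> K = {\<one>}"
    and "\<forall>K'\<in>?\<A>. K \<subseteq> K' \<longrightarrow> K' = K"
    by blast
  then show thesis
    by (intro that) auto
qed

lemma (in comm_group) prime_ord_mem_product_maximal_disjoint:
  assumes H: "subgroup H G" and K: "subgroup K G" and disjoint: "H \<inter> K = {\<one>}"
    and maximal: "\<And>K'. subgroup K' G \<Longrightarrow> H \<inter> K' = {\<one>} \<Longrightarrow> K \<subseteq> K' \<Longrightarrow> K' = K"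
    and y: "y \<in> carrier G" and py: "prime (ord y)"
  shows "y \<in> H <#> K"
proof (rule ccontr)
  assume y_notin: "y \<notin> H <#> K"
  have HK: "subgroup (H <#> K) G"
    using H K by (rule mult_subgroups)
  let ?Y = "generate G {y}"
  have Y: "subgroup ?Y G"
    using y by (simp add: generate_is_subgroup)
  have KY: "subgroup (K <#> ?Y) G"
    using K Y by (rule mult_subgroups)
  have Y_pow: "?Y = {y [^] i | i. i \<in> (UNIV :: nat set)}"
    using y py by (intro generate_pow_nat) auto
  have "H \<inter> (K <#> ?Y) \<subseteq> {\<one>}"
  proof
    fix z assume "z \<in> H \<inter> (K <#> ?Y)"
    then obtain k i where z: "z \<in> H" and k: "k \<in> K" and zki: "z = k \<otimes> y [^] (i::nat)"
      unfolding Y_pow set_mult_def by blast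
    have kc: "k \<in> carrier G"
      using K k by (rule subgroup.mem_carrier)
    have "y [^] i = z \<otimes> inv k"
      using zki kc y by (simp add: m_comm m_assoc[symmetric])
    also have "\<dots> \<in> H <#> K"
      using z subgroup.m_inv_closed[OF K k] unfolding set_mult_def by blast
    finally have "y [^] i = \<one>"
      using pow_mem_subgroup_prime_ord[OF HK y py] y_notin by blast
    then have "z = k"
      using zki kc by simp
    then show "z \<in> {\<one>}"
      using disjoint z k by blast
  qed
  then have "H \<inter> (K <#> ?Y) = {\<one>}"
    using subgroup.one_closed[OF H] subgroup.one_closed[OF KY] by blast
  then have "K <#> ?Y = K"
    using maximal[OF KY] subgroups_subset_set_mult(1)[OF K Y] by blast
  moreover have "y \<in> K <#> ?Y"
    using subgroups_subset_set_mult(2)[OF K Y] generate.incl[of y "{y}"] by blast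
  ultimately show False
    using y_notin subgroups_subset_set_mult(2)[OF H K] by blast
qed

lemma prime_coprime_cofactor_if_squarefree:
  fixes p m :: nat
  assumes "prime p" "squarefree (p * m)"
  shows "coprime p m"
proof (rule ccontr)
  assume "\<not> coprime p m"
  then have "p^2 dvd p * m"
    using assms(1) prime_imp_coprime by (auto simp: power2_eq_square)
  then show False
    using assms squarefreeD not_prime_unit by blast
qed

lemma (in group) mem_subgroup_if_prime_ord_mem:
  assumes M: "subgroup M G" and primes: "\<And>y. y \<in> carrier G \<Longrightarrow> prime (ord y) \<Longrightarrow> y \<in> M"
  shows "x \<in> carrier G \<Longrightarrow> squarefree (ord x) \<Longrightarrow> x \<in> M"
proof (induction "ord x" arbitrary: x rule: less_induct)
  case less
  have "ord x \<noteq> 0"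
    using less.prems(2) not_squarefree_0 by metis
  consider "ord x = 1" | "prime (ord x)" | p m where "prime p" "ord x = p * m" "m \<noteq> 1"
    by (metis prime_factor_nat dvdE mult.right_neutral)
  then show "x \<in> M"
  proof cases
    case 1
    then show ?thesis
      using less.prems(1) ord_eq_1 subgroup.one_closed[OF M] by auto
  next
    case 2
    then show ?thesis
      using less.prems(1) primes by blast
  next
    case (3 p m)
    have "m \<noteq> 0" "1 < p"
      using 3 \<open>ord x \<noteq> 0\<close> prime_gt_1_nat by auto
    then have "p < ord x" "m < ord x"
      using 3 by auto
    have "coprime p m"
      using 3 less.prems(2) prime_coprime_cofactor_if_squarefree by simp
    have "ord (x [^] p) = m" "ord (x [^] m) = p"
      using 3 less.prems(1) \<open>m \<noteq> 0\<close> \<open>1 < p\<close> ord_pow_factor[of x] by (auto simp: mult.commute)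
    moreover have "squarefree m" "squarefree p"
      using 3 less.prems(2) squarefree_multD by metis+
    ultimately have "x [^] p \<in> M" "x [^] m \<in> M"
      using less.hyps \<open>p < ord x\<close> \<open>m < ord x\<close> less.prems(1) by simp_all
    then show ?thesis
      using mem_subgroup_if_coprime_pows[OF M less.prems(1)] \<open>coprime p m\<close> by blast
  qed
qed

lemma (in comm_group) C_group_if_squarefree_ord:
  assumes "\<And>x. x \<in> carrier G \<Longrightarrow> squarefree (ord x)"
  shows "C_group G"
  unfolding C_group_def
proof (intro allI impI)
  fix H assume H: "subgroup H G"
  obtain K where K: "subgroup K G" and disjoint: "H \<inter> K = {\<one>}"
    and maximal: "\<And>K'. subgroup K' G \<Longrightarrow> H \<inter> K' = {\<one>} \<Longrightarrow> K \<subseteq> K' \<Longrightarrow> K' = K"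
    using maximal_disjoint_subgroup_exists[OF H] by blast
  have HK: "subgroup (H <#> K) G"
    using H K by (rule mult_subgroups)
  have "carrier G \<subseteq> H <#> K"
    using mem_subgroup_if_prime_ord_mem[OF HK] assms
      prime_ord_mem_product_maximal_disjoint[OF H K disjoint maximal] by blast
  then have "H <#> K = carrier G"
    using subgroup.subset[OF HK] by blast
  then show "\<exists>K. permutable_complement G H K"
    using K disjoint unfolding permutable_complement_def by blast
qed

lemma (in group) topological_group_continuous_lmult:
  assumes TG: "topological_group G T" and c: "c \<in> carrier G"
  shows "continuous_map T T (\<lambda>x. c \<otimes> x)"
proof -
  have mult: "continuous_map (prod_topology T T) T (\<lambda>(x, y). x \<otimes> y)"
    and top: "topspace T = carrier G"
    using TG unfolding topological_group_def by auto
  have "continuous_map T (prod_topology T T) (\<lambda>x. (c, x))"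
    by (intro continuous_map_pairedI) (simp_all add: top c continuous_map_id[unfolded id_def])
  from continuous_map_compose[OF this mult] show ?thesis
    by (simp add: o_def)
qed

lemma (in group) topological_group_continuous_pow:
  assumes TG: "topological_group G T"
  shows "continuous_map T T (\<lambda>x. x [^] (n::nat))"
proof (induction n)
  case 0
  have "topspace T = carrier G"
    using TG unfolding topological_group_def by auto
  then show ?case
    by simp
next
  case (Suc n)
  have mult: "continuous_map (prod_topology T T) T (\<lambda>(x, y). x \<otimes> y)"
    using TG unfolding topological_group_def by auto
  have "continuous_map T (prod_topology T T) (\<lambda>x. (x [^] n, x))"
    by (intro continuous_map_pairedI) (simp_all add: Suc continuous_map_id[unfolded id_def])
  from continuous_map_compose[OF this mult] show ?case
    by (simp add: o_def)
qed

lemma (in group) torsion_compact_group_pow_eq_one_on_open: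
  assumes TG: "topological_group G T" and "compact_space T" "Hausdorff_space T"
    and "torsion_group G"
  obtains U and n :: nat where "openin T U" "U \<noteq> {}" "0 < n" "\<And>x. x \<in> U \<Longrightarrow> x [^] n = \<one>"
proof -
  have top: "topspace T = carrier G"
    using TG unfolding topological_group_def by blast
  define F where "F n = {x \<in> topspace T. x [^] Suc n \<in> {\<one>}}" for n
  have "closedin T {\<one>}"
    using \<open>Hausdorff_space T\<close> top by (simp add: closedin_t1_singleton Hausdorff_imp_t1_space)
  then have closed: "closedin T (F n)" for n
    unfolding F_def by (rule closedin_continuous_map_preimage[OF topological_group_continuous_pow[OF TG]])
  have "x \<in> F (ord x - 1)" if "x \<in> topspace T" for x
  proof -
    have "ord x \<noteq> 0"
      using \<open>torsion_group G\<close> that top torsion_group_iff_ord_nonzero by blast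
    then show ?thesis
      using that top unfolding F_def by simp
  qed
  then have "\<Union>(range F) = topspace T"
    unfolding F_def by blast
  then have "T interior_of \<Union>(range F) = carrier G"
    using top by (metis interior_of_topspace)
  then have "T interior_of \<Union>(range F) \<noteq> {}"
    by blast
  moreover have "locally_compact_space T \<and> regular_space T"
    using \<open>compact_space T\<close> \<open>Hausdorff_space T\<close>
    by (simp add: compact_imp_locally_compact_space compact_Hausdorff_imp_regular_space)
  ultimately obtain n where "T interior_of F n \<noteq> {}"
    using Baire_category_alt[of T "range F"] closed by auto
  moreover have "x [^] Suc n = \<one>" if "x \<in> T interior_of F n" for x
    using that interior_of_subset[of T "F n"] unfolding F_def by blast
  ultimately show thesis
    by (intro that[of "T interior_of F n" "Suc n"]) auto
qed

lemma (in comm_group) bounded_exponent_if_pow_eq_one_on_open: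
  assumes TG: "topological_group G T" and "compact_space T" and "torsion_group G"
    and U: "openin T U" "U \<noteq> {}" and "0 < (n::nat)" and pow: "\<And>x. x \<in> U \<Longrightarrow> x [^] n = \<one>"
  shows "\<exists>N::nat. 0 < N \<and> (\<forall>z\<in>carrier G. z [^] N = \<one>)"
proof -
  have top: "topspace T = carrier G"
    using TG unfolding topological_group_def by blast
  obtain a where "a \<in> U"
    using U(2) by blast
  then have a: "a \<in> carrier G"
    using U(1) top openin_subset by blast
  have ord_pos: "ord x \<noteq> 0" if "x \<in> carrier G" for x
    using \<open>torsion_group G\<close> that torsion_group_iff_ord_nonzero by blast
  \<comment> \<open>the translate g a\<inverse> U of U, an open neighbourhood of g\<close>
  define W where "W g = {z \<in> topspace T. (a \<otimes> inv g) \<otimes> z \<in> U}" for g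
  have "openin T (W g)" if "g \<in> carrier G" for g
    unfolding W_def using a that
    by (intro openin_continuous_map_preimage[OF topological_group_continuous_lmult[OF TG] U(1)]) simp
  then have "\<forall>V\<in>W ` carrier G. openin T V"
    by blast
  moreover have "g \<in> W g" if "g \<in> carrier G" for g
    using that a \<open>a \<in> U\<close> top unfolding W_def by (simp add: m_assoc)
  then have "topspace T \<subseteq> \<Union>(W ` carrier G)"
    using top by blast
  ultimately obtain \<F> where \<F>: "finite \<F>" "\<F> \<subseteq> W ` carrier G" "topspace T \<subseteq> \<Union>\<F>"
    using compact_space_alt[THEN iffD1, rule_format, OF \<open>compact_space T\<close> conjI] by meson
  then obtain S where S: "S \<subseteq> carrier G" "finite S" "\<F> = W ` S"
    using finite_subset_image[OF \<F>(1,2)] by blast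
  then have cover: "carrier G \<subseteq> (\<Union>g\<in>S. W g)"
    using \<F>(3) top by blast
  define N where "N = n * ord a * (\<Prod>g\<in>S. ord g)"
  have ord_dvd: "ord z dvd N" if z: "z \<in> carrier G" for z
  proof -
    obtain g where g: "g \<in> S" "z \<in> W g"
      using z cover by blast
    then have gc: "g \<in> carrier G"
      using S(1) by blast
    define w where "w = (a \<otimes> inv g) \<otimes> z"
    have w: "w \<in> carrier G" "w \<in> U"
      using a gc z g(2) unfolding W_def w_def by auto
    have "z = inv (a \<otimes> inv g) \<otimes> w"
      using a gc z w(1) unfolding w_def by (subst inv_solve_left) simp_all
    also have "inv (a \<otimes> inv g) = g \<otimes> inv a"
      using a gc by (simp add: inv_mult_group)
    finally have "z = (g \<otimes> inv a) \<otimes> w" .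
    then have "ord z dvd ord (g \<otimes> inv a) * ord w"
      using abelian_ord_mul_divides[of "g \<otimes> inv a" w] a gc w(1) by simp
    also have "\<dots> dvd (ord g * ord a) * n"
    proof (rule mult_dvd_mono)
      show "ord (g \<otimes> inv a) dvd ord g * ord a"
        using abelian_ord_mul_divides[of g "inv a"] a gc by simp
      show "ord w dvd n"
        using pow_eq_id[OF w(1)] pow[OF w(2)] by simp
    qed
    also have "\<dots> dvd N"
      using dvd_prodI[OF S(2) g(1), of ord] unfolding N_def
      by (simp add: ac_simps mult_dvd_mono)
    finally show ?thesis .
  qed
  then have "\<forall>z\<in>carrier G. z [^] N = \<one>"
    by (simp add: pow_eq_id)
  moreover have "0 < N"
    using \<open>0 < n\<close> ord_pos a S unfolding N_def by (auto simp: subset_iff)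
  ultimately show ?thesis
    by blast
qed

lemma (in group) exponent_exists:
  assumes "0 < (N::nat)" "\<forall>x\<in>carrier G. x [^] N = \<one>"
  shows "\<exists>e. is_exponent G e"
proof -
  let ?P = "\<lambda>m::nat. 0 < m \<and> (\<forall>x\<in>carrier G. x [^] m = \<one>)"
  have "?P (LEAST m. ?P m)"
    by (rule LeastI[of ?P N]) (use assms in blast)
  moreover have "(LEAST m. ?P m) \<le> m" if "?P m" for m
    using that by (rule Least_le)
  ultimately show ?thesis
    unfolding is_exponent_def by blast
qed

lemma (in comm_group) profinite_torsion_group_has_exponent:
  assumes "profinite_group G T" "torsion_group G"
  shows "\<exists>e. is_exponent G e"
proof -
  note profinite = profinite_groupD[OF assms(1)]
  obtain U and n :: nat
    where "openin T U" "U \<noteq> {}" "0 < n" "\<And>x. x \<in> U \<Longrightarrow> x [^] n = \<one>"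
    using torsion_compact_group_pow_eq_one_on_open[OF profinite(1,3,4) assms(2)] by blast
  then obtain N :: nat where "0 < N" "\<forall>x\<in>carrier G. x [^] N = \<one>"
    using bounded_exponent_if_pow_eq_one_on_open[OF profinite(1,3) assms(2)] by blast
  then show ?thesis
    by (rule exponent_exists)
qed

lemma squarefree_dvd_div_prime:
  fixes d e p :: nat
  assumes p: "prime p" and "p^2 dvd e" "d dvd e" "squarefree d"
  shows "d dvd e div p"
proof -
  obtain c where e: "e = d * c"
    using \<open>d dvd e\<close> by blast
  show ?thesis
  proof (cases "p dvd c")
    case True
    then obtain c' where "c = p * c'" ..
    then have "e div p = d * c'"
      using e p by (simp add: prime_gt_0_nat)
    then show ?thesis
      by simp
  next
    case False
    then have "coprime (p^2) c"
      using p by (simp add: prime_imp_coprime)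
    then have "p^2 dvd d"
      using \<open>p^2 dvd e\<close> e coprime_dvd_mult_left_iff by blast
    then show ?thesis
      using \<open>squarefree d\<close> p squarefreeD not_prime_unit by blast
  qed
qed

lemma (in group) is_exponent_squarefree:
  assumes e: "is_exponent G e" and sqf: "\<And>x. x \<in> carrier G \<Longrightarrow> squarefree (ord x)"
  shows "squarefree e"
proof (rule ccontr)
  assume "\<not> squarefree e"
  moreover have "0 < e"
    using e unfolding is_exponent_def by blast
  ultimately obtain p :: nat where p: "prime p" and "p^2 dvd e"
    using squarefree_factorial_semiring[of e] by auto
  have pow_div: "x [^] (e div p) = \<one>" if "x \<in> carrier G" for x
  proof -
    have "ord x dvd e"
      using e that pow_eq_id[OF that] unfolding is_exponent_def by blast
    then have "ord x dvd e div p"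
      using squarefree_dvd_div_prime[OF p \<open>p^2 dvd e\<close>] sqf[OF that] by blast
    then show ?thesis
      using pow_eq_id[OF that] by blast
  qed
  have "e div p < e"
    using \<open>0 < e\<close> p prime_gt_1_nat by simp
  moreover have "0 < e div p"
  proof -
    from \<open>p^2 dvd e\<close> obtain c where "e = p^2 * c" ..
    then have "e = p * (p * c)"
      by (simp add: power2_eq_square)
    then show ?thesis
      using \<open>0 < e\<close> p by (simp add: prime_gt_0_nat)
  qed
  ultimately have "e \<le> e div p"
    using e pow_div unfolding is_exponent_def by blast
  with \<open>e div p < e\<close> show False
    by simp
qed

theorem proposition2p13:
  fixes G :: "('a, 'b) monoid_scheme" and T :: "'a topology"
  assumes "comm_group G" and "profinite_C_group G T"
  shows "(C_group G \<longleftrightarrow> torsion_group G) \<and>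
         (torsion_group G \<longleftrightarrow> (\<exists>e. is_exponent G e \<and> squarefree e))"
proof -
  interpret comm_group G
    by (rule assms(1))
  have profinite: "profinite_group G T"
    using assms(2) unfolding profinite_C_group_def by blast
  have squarefree_ord: "squarefree (ord x)" if "torsion_group G" "x \<in> carrier G" for x
    using squarefree_ord_if_finite_subgroups_complemented
      [OF profinite_C_group_finite_subgroups_complemented[OF assms(2)] that(2)] that
    by (simp add: torsion_group_iff_ord_nonzero)
  have "C_group G \<longleftrightarrow> torsion_group G"
  proof
    show "torsion_group G" if "C_group G"
      using that by (rule C_group_imp_torsion_group)
    show "C_group G" if "torsion_group G"
      using squarefree_ord[OF that] by (rule C_group_if_squarefree_ord)
  qed
  moreover have "\<exists>e. is_exponent G e \<and> squarefree e" if torsion: "torsion_group G"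
  proof -
    obtain e where "is_exponent G e"
      using profinite_torsion_group_has_exponent[OF profinite torsion] ..
    then show ?thesis
      using is_exponent_squarefree[OF _ squarefree_ord[OF torsion]] by blast
  qed
  moreover have "torsion_group G" if "is_exponent G e" for e
    using that unfolding is_exponent_def torsion_group_def by blast
  ultimately show ?thesis
    by blast
qed

end
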